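(* Let $K$ be a unital commutative ring, let $A$ be a $K$-algebra, and let $L,M\subseteq A$ be Lie ideals. Then $A[L,M]A\subseteq A[L,M]$. Moreover, if $L_0\subseteq L$ and $M_0\subseteq M$ are subsets and $m,n\in\mathbb{N}$ satisfy $[A,L_0]_1\subseteq \Sigma^n L_0$ and $[A,M_0]_1\subseteq \Sigma^m M_0$, then \[ A\cdot [L_0,M_0]_1\cdot A\subseteq \Sigma^{1+n+m}\big(A\cdot[L_0,M_0]_1\big). \]
   Context: $K$-algebras are associative and not necessarily unital. For $x,y\in A$, $[x,y]=xy-yx$. For subsets $X,Y\subseteq A$: $[X,Y]$ is the additive subgroup generated by all $[x,y]$ ($x\in X,y\in Y$); $XY$ is the additive subgroup generated by all $xy$ ($x\in X,y\in Y$), and $XYZ=(XY)Z$; $[X,Y]_1=\{[x,y]: x\in X,y\in Y\}$ is the set of commutators; $X\cdot Y=\{xy:x\in X,y\in Y\}$ is the set of products (and $X\cdot Y\cdot Z$ the set of triple products); $\Sigma^n X=\{x_1+\dots+x_n: x_i\in X\}$. A Lie ideal of $A$ is a $K$-linear subspace $L$ with $[A,L]\subseteq L$. *)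

theory Defs
  imports Main
begin

definition is_K_algebra :: "('k::comm_ring_1 \<Rightarrow> 'a::ring \<Rightarrow> 'a) \<Rightarrow> bool" where
  "is_K_algebra smult \<longleftrightarrow>
     (\<forall>k x y. smult k (x + y) = smult k x + smult k y) \<and>
     (\<forall>k l x. smult (k + l) x = smult k x + smult l x) \<and>
     (\<forall>k l x. smult (k * l) x = smult k (smult l x)) \<and>
     (\<forall>x. smult 1 x = x) \<and>
     (\<forall>k x y. smult k (x * y) = smult k x * y) \<and>
     (\<forall>k x y. smult k (x * y) = x * smult k y)"

definition lie_br :: "'a::ring \<Rightarrow> 'a \<Rightarrow> 'a" where
  "lie_br x y = x * y - y * x"

inductive_set addgen :: "'a::ab_group_add set \<Rightarrow> 'a set" for X where
  base: "x \<in> X \<Longrightarrow> x \<in> addgen X"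
| zero: "0 \<in> addgen X"
| add: "x \<in> addgen X \<Longrightarrow> y \<in> addgen X \<Longrightarrow> x + y \<in> addgen X"
| neg: "x \<in> addgen X \<Longrightarrow> - x \<in> addgen X"

text \<open>[X,Y]: additive subgroup generated by commutators.\<close>
definition comm_grp :: "'a::ring set \<Rightarrow> 'a set \<Rightarrow> 'a set" where
  "comm_grp X Y = addgen {lie_br x y | x y. x \<in> X \<and> y \<in> Y}"

text \<open>XY: additive subgroup generated by products.\<close>
definition prod_grp :: "'a::ring set \<Rightarrow> 'a set \<Rightarrow> 'a set" where
  "prod_grp X Y = addgen {x * y | x y. x \<in> X \<and> y \<in> Y}"

text \<open>[X,Y]_1: set of commutators.\<close>
definition comm_set :: "'a::ring set \<Rightarrow> 'a set \<Rightarrow> 'a set" where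
  "comm_set X Y = {lie_br x y | x y. x \<in> X \<and> y \<in> Y}"

text \<open>X . Y: set of products.\<close>
definition prod_set :: "'a::ring set \<Rightarrow> 'a set \<Rightarrow> 'a set" where
  "prod_set X Y = {x * y | x y. x \<in> X \<and> y \<in> Y}"

definition prod3_set :: "'a::ring set \<Rightarrow> 'a set \<Rightarrow> 'a set \<Rightarrow> 'a set" where
  "prod3_set X Y Z = {x * y * z | x y z. x \<in> X \<and> y \<in> Y \<and> z \<in> Z}"

text \<open>Sigma^n X: sums of exactly n elements of X (Sigma^0 X = {0}).\<close>
definition sigma_n :: "nat \<Rightarrow> 'a::monoid_add set \<Rightarrow> 'a set" where
  "sigma_n n X = {sum_list xs | xs. length xs = n \<and> set xs \<subseteq> X}"

definition lie_ideal :: "('k::comm_ring_1 \<Rightarrow> 'a::ring \<Rightarrow> 'a) \<Rightarrow> 'a set \<Rightarrow> bool" where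
  "lie_ideal smult L \<longleftrightarrow>
     0 \<in> L \<and> (\<forall>x\<in>L. \<forall>y\<in>L. x + y \<in> L) \<and> (\<forall>k. \<forall>x\<in>L. smult k x \<in> L) \<and>
     (\<forall>a x. x \<in> L \<longrightarrow> lie_br a x \<in> L)"

end

theory Submission
  imports Defs "HOL.Modules"
begin

text \<open>Everything rests on one identity: moving b across a commutator gives
  \<open>[l,m] b = b [l,m] + [[l,m],b]\<close>, and since \<open>ad(-b)\<close> is a derivation,
  \<open>[[l,m],b] = [[-b,l],m] + [l,[-b,m]]\<close>. Hence
  \<open>a [l,m] b = ab [l,m] + a [[-b,l],m] + a [l,[-b,m]]\<close>, and every term on the right
  is a left multiple of a commutator with entries again in L and M (Lie ideals are
  stable under \<open>[-b,_]\<close>). For the counting statement, \<open>[-b,l]\<close> and \<open>[-b,m]\<close>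
  split into n and m summands from L0 and M0, which gives the \<open>1 + n + m\<close> products.\<close>

lemma mult_lie_br_mult:
  fixes a b l m :: "'a::ring"
  shows "a * lie_br l m * b
    = a * b * lie_br l m + a * lie_br (lie_br (- b) l) m + a * lie_br l (lie_br (- b) m)"
  by (simp add: lie_br_def algebra_simps)

lemma additive_mult_right: "additive (\<lambda>x::'a::ring. x * b)"
  by unfold_locales (simp add: algebra_simps)

lemma additive_mult_sandwich: "additive (\<lambda>x::'a::ring. a * x * b)"
  by unfold_locales (simp add: algebra_simps)

lemma additive_mult_lie_br:
  fixes a l m :: "'a::ring"
  shows "additive (\<lambda>x. a * lie_br x m)" and "additive (\<lambda>x. a * lie_br l x)"
  by unfold_locales (simp_all add: lie_br_def algebra_simps)

lemma (in additive) sum_list_map: "f (sum_list xs) = sum_list (map f xs)"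
  by (induction xs) (simp_all add: zero add)

lemma (in additive) addgen_image:
  assumes "f ` X \<subseteq> addgen Y" and "x \<in> addgen X"
  shows "f x \<in> addgen Y"
  using assms(2) by induction (use assms(1) in \<open>auto simp: zero add minus intro: addgen.intros\<close>)

lemma addgen_subset_addgen:
  assumes "X \<subseteq> addgen Y"
  shows "addgen X \<subseteq> addgen Y"
proof
  fix x assume "x \<in> addgen X"
  then show "x \<in> addgen Y"
    by induction (use assms in \<open>auto intro: addgen.intros\<close>)
qed

lemma prod_grp_subset_prod_grp:
  assumes "\<And>x y. x \<in> X \<Longrightarrow> y \<in> Y \<Longrightarrow> x * y \<in> prod_grp U V"
  shows "prod_grp X Y \<subseteq> prod_grp U V"
  using assms unfolding prod_grp_def by (intro addgen_subset_addgen) blast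

lemma lie_br_mem_comm_grp: "l \<in> L \<Longrightarrow> m \<in> M \<Longrightarrow> lie_br l m \<in> comm_grp L M"
  unfolding comm_grp_def by (auto intro: addgen.base)

lemma mult_mem_prod_grp: "x \<in> X \<Longrightarrow> y \<in> Y \<Longrightarrow> x * y \<in> prod_grp X Y"
  unfolding prod_grp_def by (auto intro: addgen.base)

lemma mult_comm_grp_mult_mem:
  fixes L M :: "'a::ring set"
  assumes L: "\<And>a x. x \<in> L \<Longrightarrow> lie_br a x \<in> L"
    and M: "\<And>a x. x \<in> M \<Longrightarrow> lie_br a x \<in> M"
    and c: "c \<in> comm_grp L M"
  shows "a * c * b \<in> prod_grp UNIV (comm_grp L M)"
proof -
  let ?P = "prod_grp UNIV (comm_grp L M)"
  have "a * lie_br l m * b \<in> ?P" if "l \<in> L" "m \<in> M" for l m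
  proof -
    have "a * b * lie_br l m \<in> ?P" "a * lie_br (lie_br (- b) l) m \<in> ?P"
      "a * lie_br l (lie_br (- b) m) \<in> ?P"
      using that L M by (blast intro: mult_mem_prod_grp lie_br_mem_comm_grp)+
    then show ?thesis
      unfolding mult_lie_br_mult prod_grp_def by (blast intro: addgen.add)
  qed
  then have "(\<lambda>x. a * x * b) ` {lie_br l m | l m. l \<in> L \<and> m \<in> M}
      \<subseteq> addgen {x * y | x y. x \<in> UNIV \<and> y \<in> comm_grp L M}"
    unfolding prod_grp_def by blast
  with c show ?thesis
    unfolding prod_grp_def[of UNIV] comm_grp_def[of L M]
    by (blast intro: additive.addgen_image[OF additive_mult_sandwich])
qed

lemma prod_grp_UNIV_comm_grp_mult_mem:
  fixes L M :: "'a::ring set"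
  assumes L: "\<And>a x. x \<in> L \<Longrightarrow> lie_br a x \<in> L"
    and M: "\<And>a x. x \<in> M \<Longrightarrow> lie_br a x \<in> M"
    and y: "y \<in> prod_grp UNIV (comm_grp L M)"
  shows "y * b \<in> prod_grp UNIV (comm_grp L M)"
  using additive.addgen_image[OF additive_mult_right,
      where X = "{x * c | x c. x \<in> UNIV \<and> c \<in> comm_grp L M}"]
    y mult_comm_grp_mult_mem[OF L M]
  unfolding prod_grp_def[of UNIV] by blast

lemma prod_grp_prod_grp_UNIV_comm_grp:
  fixes L M :: "'a::ring set"
  assumes "\<And>a x. x \<in> L \<Longrightarrow> lie_br a x \<in> L"
    and "\<And>a x. x \<in> M \<Longrightarrow> lie_br a x \<in> M"
  shows "prod_grp (prod_grp UNIV (comm_grp L M)) UNIV \<subseteq> prod_grp UNIV (comm_grp L M)"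
  by (rule prod_grp_subset_prod_grp) (use prod_grp_UNIV_comm_grp_mult_mem[OF assms] in blast)

lemma prod3_set_comm_set_subset_sigma_n:
  fixes L0 M0 :: "'a::ring set"
  assumes L0: "comm_set UNIV L0 \<subseteq> sigma_n n L0"
    and M0: "comm_set UNIV M0 \<subseteq> sigma_n m M0"
  shows "prod3_set UNIV (comm_set L0 M0) UNIV
           \<subseteq> sigma_n (1 + n + m) (prod_set UNIV (comm_set L0 M0))"
proof
  fix z assume "z \<in> prod3_set UNIV (comm_set L0 M0) UNIV"
  then obtain a b l u where z: "z = a * lie_br l u * b" and l: "l \<in> L0" and u: "u \<in> M0"
    unfolding prod3_set_def comm_set_def by auto
  obtain ls where ls: "lie_br (- b) l = sum_list ls" "length ls = n" "set ls \<subseteq> L0"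
    using L0 l unfolding comm_set_def sigma_n_def by blast
  obtain us where us: "lie_br (- b) u = sum_list us" "length us = m" "set us \<subseteq> M0"
    using M0 u unfolding comm_set_def sigma_n_def by blast
  define xs where
    "xs = a * b * lie_br l u # map (\<lambda>x. a * lie_br x u) ls @ map (\<lambda>x. a * lie_br l x) us"
  have "c * lie_br x y \<in> prod_set UNIV (comm_set L0 M0)" if "x \<in> L0" "y \<in> M0" for c x y
    using that unfolding prod_set_def comm_set_def by blast
  then have "set xs \<subseteq> prod_set UNIV (comm_set L0 M0)"
    using ls us l u unfolding xs_def by auto
  moreover have "length xs = 1 + n + m"
    using ls us by (simp add: xs_def)
  moreover have "z = sum_list xs"
    unfolding z mult_lie_br_mult xs_def ls(1) us(1)
    by (simp add: additive.sum_list_map[OF additive_mult_lie_br(1)]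
        additive.sum_list_map[OF additive_mult_lie_br(2)] add.assoc)
  ultimately show "z \<in> sigma_n (1 + n + m) (prod_set UNIV (comm_set L0 M0))"
    unfolding sigma_n_def by blast
qed

theorem lemma3p1:
  fixes smult :: "'k::comm_ring_1 \<Rightarrow> 'a::ring \<Rightarrow> 'a"
    and L M :: "'a set"
  assumes alg: "is_K_algebra smult"
    and L: "lie_ideal smult L" and M: "lie_ideal smult M"
  shows "prod_grp (prod_grp UNIV (comm_grp L M)) UNIV \<subseteq> prod_grp UNIV (comm_grp L M) \<and>
         (\<forall>L0 M0 (m::nat) (n::nat).
           L0 \<subseteq> L \<longrightarrow> M0 \<subseteq> M \<longrightarrow>
           comm_set UNIV L0 \<subseteq> sigma_n n L0 \<longrightarrow>
           comm_set UNIV M0 \<subseteq> sigma_n m M0 \<longrightarrow>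
           prod3_set UNIV (comm_set L0 M0) UNIV
             \<subseteq> sigma_n (1 + n + m) (prod_set UNIV (comm_set L0 M0)))"
proof (intro conjI allI impI)
  have "\<And>a x. x \<in> L \<Longrightarrow> lie_br a x \<in> L" and "\<And>a x. x \<in> M \<Longrightarrow> lie_br a x \<in> M"
    using L M by (simp_all add: lie_ideal_def)
  then show "prod_grp (prod_grp UNIV (comm_grp L M)) UNIV \<subseteq> prod_grp UNIV (comm_grp L M)"
    by (rule prod_grp_prod_grp_UNIV_comm_grp)
qed (rule prod3_set_comm_set_subset_sigma_n)

end
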